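(* Let $G$ be a finite group of order $v=mn$ and $H\le G$ a subgroup of order $n$. Suppose $S'$ is a family of subsets of $G$ which partitions $G\setminus H$ and is both a $(v,s,k,\lambda_1,\mu_1)$-DPDF and a $(v,s,k,\lambda_2,\mu_2)$-EPDF in $G$. Then (i) $n\mid\mu_1$ and $n\mid\mu_2$; (ii) if $\gcd(mn-n,mn-1)=1$, then either (a) $S'$ is an $(mn,s,k,k-1,0)$-DPDF and an $(mn,s,k,mn-2n-k+1,mn-n)$-EPDF, or (b) $S'$ is an $(mn,s,k,k-n,mn-n)$-DPDF and an $(mn,s,k,mn-n-k,0)$-EPDF; (iii) if $n=2$, then either (a) $S'$ is a $(2m,s,k,k-1,0)$-DPDF and a $(2m,s,k,2m-3-k,2m-2)$-EPDF, or (b) $S'$ is a $(2m,s,k,k-2,2m-2)$-DPDF and a $(2m,s,k,2m-2-k,0)$-EPDF.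
   Context: Groups are written multiplicatively with identity $e$; $G^*=G\setminus\{e\}$. For $D\subseteq G$, $\Delta(D)$ is the multiset $\{xy^{-1}: x,y\in D, x\ne y\}$; for $D_1,D_2\subseteq G$, $\Delta(D_1,D_2)$ is the multiset $\{xy^{-1}:x\in D_1,y\in D_2\}$. For a family $A=\{A_1,\dots,A_s\}$ of pairwise disjoint subsets, ${\rm Int}(A)=\bigcup_i\Delta(A_i)$ and ${\rm Ext}(A)=\bigcup_{i\ne j}\Delta(A_i,A_j)$ (multiset unions). For $|G|=v$, a $(v,s,k,\lambda,\mu)$-DPDF is a family of $s$ pairwise disjoint $k$-subsets of $G^*$ with union $S$ such that ${\rm Int}(A)$ contains each element of $S$ exactly $\lambda$ times and each element of $G\setminus(S\cup\{e\})$ exactly $\mu$ times; a $(v,s,k,\lambda,\mu)$-EPDF is defined the same way using ${\rm Ext}(A)$. A family partitions a set $X$ if its members are pairwise disjoint with union $X$. *)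

theory Defs
  imports "HOL-Algebra.Coset" "HOL-Library.Multiset"
begin

definition Delta :: "('a, 'b) monoid_scheme \<Rightarrow> 'a set \<Rightarrow> 'a multiset" where
  "Delta G D = image_mset (\<lambda>(x, y). x \<otimes>\<^bsub>G\<^esub> inv\<^bsub>G\<^esub> y)
                 (mset_set {(x, y). x \<in> D \<and> y \<in> D \<and> x \<noteq> y})"

definition Delta2 :: "('a, 'b) monoid_scheme \<Rightarrow> 'a set \<Rightarrow> 'a set \<Rightarrow> 'a multiset" where
  "Delta2 G D1 D2 = image_mset (\<lambda>(x, y). x \<otimes>\<^bsub>G\<^esub> inv\<^bsub>G\<^esub> y) (mset_set (D1 \<times> D2))"

definition IntD :: "('a, 'b) monoid_scheme \<Rightarrow> 'a set set \<Rightarrow> 'a multiset" where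
  "IntD G A = (\<Sum>B\<in>A. Delta G B)"

definition ExtD :: "('a, 'b) monoid_scheme \<Rightarrow> 'a set set \<Rightarrow> 'a multiset" where
  "ExtD G A = (\<Sum>P\<in>{(B, C). B \<in> A \<and> C \<in> A \<and> B \<noteq> C}. Delta2 G (fst P) (snd P))"

definition pdf_family :: "('a, 'b) monoid_scheme \<Rightarrow> nat \<Rightarrow> nat \<Rightarrow> nat \<Rightarrow> 'a set set \<Rightarrow> bool" where
  "pdf_family G v s k A \<longleftrightarrow>
     order G = v \<and> finite A \<and> card A = s \<and> pairwise disjnt A \<and>
     (\<forall>B\<in>A. B \<subseteq> carrier G - {\<one>\<^bsub>G\<^esub>} \<and> card B = k)"

definition DPDF :: "('a, 'b) monoid_scheme \<Rightarrow> nat \<Rightarrow> nat \<Rightarrow> nat \<Rightarrow> int \<Rightarrow> int \<Rightarrow> 'a set set \<Rightarrow> bool" where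
  "DPDF G v s k lam mu A \<longleftrightarrow> pdf_family G v s k A \<and>
     (\<forall>g\<in>\<Union>A. int (count (IntD G A) g) = lam) \<and>
     (\<forall>g\<in>carrier G - (\<Union>A \<union> {\<one>\<^bsub>G\<^esub>}). int (count (IntD G A) g) = mu)"

definition EPDF :: "('a, 'b) monoid_scheme \<Rightarrow> nat \<Rightarrow> nat \<Rightarrow> nat \<Rightarrow> int \<Rightarrow> int \<Rightarrow> 'a set set \<Rightarrow> bool" where
  "EPDF G v s k lam mu A \<longleftrightarrow> pdf_family G v s k A \<and>
     (\<forall>g\<in>\<Union>A. int (count (ExtD G A) g) = lam) \<and>
     (\<forall>g\<in>carrier G - (\<Union>A \<union> {\<one>\<^bsub>G\<^esub>}). int (count (ExtD G A) g) = mu)"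

definition partitions :: "'a set set \<Rightarrow> 'a set \<Rightarrow> bool" where
  "partitions A X \<longleftrightarrow> pairwise disjnt A \<and> \<Union>A = X"

end

theory Submission
  imports Defs "HOL-Algebra.Left_Coset" "HOL-Library.Disjoint_Sets"
begin

text \<open>
  Write S = G - H. For g \<noteq> 1 the multiplicities of g in Int(A) and Ext(A) add up to its
  multiplicity in \<Delta>(S), the number of y \<in> S with g y \<in> S. Since {y. g y \<in> H} is the left coset
  of H containing g\<inverse>, this number is |G| - |H| for g \<in> H and |G| - 2|H| otherwise, so
  lam1 + lam2 = mn - 2n and mu1 + mu2 = mn - n. Counting the s k (k - 1) elements of Int(A)
  gives (m - 1) n (k - 1 - lam1) = (n - 1) mu1, whence n divides mu1 and mu2. The gcd condition
  amounts to gcd(m - 1, n - 1) = 1; then mu1 = n t with m - 1 dividing t and 0 \<le> t \<le> m - 1,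
  so mu1 is 0 or (m - 1) n, and the remaining parameters follow. For n = 2 the gcd condition
  holds automatically.
\<close>

lemma count_image_mset_mset_set:
  assumes "finite P"
  shows "count (image_mset f (mset_set P)) y = card {x \<in> P. f x = y}"
  using assms by (simp add: count_image_mset vimage_def Int_def conj_commute)

lemma image_mset_sum: "image_mset f (\<Sum>i\<in>I. M i) = (\<Sum>i\<in>I. image_mset f (M i))"
  by (induction I rule: infinite_finite_induct) auto

lemma mset_set_UN_disjoint:
  assumes "finite I" "\<And>i. i \<in> I \<Longrightarrow> finite (F i)" "disjoint_family_on F I"
  shows "mset_set (\<Union>i\<in>I. F i) = (\<Sum>i\<in>I. mset_set (F i))"
  using assms by (induction I rule: finite_induct) (simp_all add: mset_set_Union disjoint_family_on_insert)

lemma disjoint_family_on_Times: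
  assumes "pairwise disjnt A" "\<And>P. P \<in> A \<times> A \<Longrightarrow> F P \<subseteq> fst P \<times> snd P"
  shows "disjoint_family_on F (A \<times> A)"
  unfolding disjoint_family_on_def
proof (intro ballI impI)
  fix P Q assume PQ: "P \<in> A \<times> A" "Q \<in> A \<times> A" "P \<noteq> Q"
  then have "fst P \<inter> fst Q = {} \<or> snd P \<inter> snd Q = {}"
    using assms(1) unfolding pairwise_def disjnt_def by (metis mem_Times_iff prod_eqI)
  then show "F P \<inter> F Q = {}"
    using assms(2)[of P] assms(2)[of Q] PQ by blast
qed

lemma IntD_plus_ExtD:
  fixes A :: "'a set set"
  assumes "finite A" "\<And>B. B \<in> A \<Longrightarrow> finite B" "pairwise disjnt A"
  shows "IntD G A + ExtD G A = Delta G (\<Union>A)"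
proof -
  define q where "q = (\<lambda>(x, y). x \<otimes>\<^bsub>G\<^esub> inv\<^bsub>G\<^esub> y)"
  define F :: "'a set \<times> 'a set \<Rightarrow> ('a \<times> 'a) set"
    where "F P = {(x, y). x \<in> fst P \<and> y \<in> snd P \<and> x \<noteq> y}" for P
  let ?diag = "(\<lambda>B. (B, B)) ` A" and ?off = "{(B, C). B \<in> A \<and> C \<in> A \<and> B \<noteq> C}"
  have F_sub: "F P \<subseteq> fst P \<times> snd P" for P
    by (auto simp: F_def)
  have fin_F: "finite (F P)" if "P \<in> A \<times> A" for P
    by (rule finite_subset[OF F_sub]) (use that assms(2) in auto)
  have disj_F: "disjoint_family_on F (A \<times> A)"
    using assms(3) F_sub by (rule disjoint_family_on_Times)
  have "Delta G (\<Union>A) = image_mset q (mset_set (\<Union>P\<in>A \<times> A. F P))"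
    unfolding Delta_def q_def F_def by (intro arg_cong[where f = "\<lambda>X. image_mset _ (mset_set X)"]) auto
  also have "\<dots> = (\<Sum>P\<in>A \<times> A. image_mset q (mset_set (F P)))"
    using assms(1) fin_F disj_F by (simp add: mset_set_UN_disjoint image_mset_sum)
  also have "A \<times> A = ?diag \<union> ?off" by auto
  also have "(\<Sum>P\<in>?diag \<union> ?off. image_mset q (mset_set (F P)))
      = (\<Sum>P\<in>?diag. image_mset q (mset_set (F P))) + (\<Sum>P\<in>?off. image_mset q (mset_set (F P)))"
    using assms(1) by (intro sum.union_disjoint finite_subset[of ?off "A \<times> A"]) auto
  also have "(\<Sum>P\<in>?diag. image_mset q (mset_set (F P))) = IntD G A"
    unfolding IntD_def Delta_def q_def F_def by (simp add: sum.reindex inj_on_def)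
  also have "(\<Sum>P\<in>?off. image_mset q (mset_set (F P))) = ExtD G A"
    unfolding ExtD_def Delta2_def q_def
  proof (intro sum.cong refl arg_cong[where f = "\<lambda>X. image_mset _ (mset_set X)"])
    fix P assume "P \<in> ?off"
    then have "disjnt (fst P) (snd P)"
      using assms(3) by (auto dest: pairwiseD)
    then have "fst P \<inter> snd P = {}"
      by (simp add: disjnt_def)
    then show "F P = fst P \<times> snd P"
      by (auto simp: F_def)
  qed
  finally show ?thesis ..
qed

lemma size_eq_sum_count:
  assumes "finite X" "set_mset M \<subseteq> X"
  shows "size M = (\<Sum>x\<in>X. count M x)"
proof -
  have "size M = (\<Sum>x\<in>set_mset M. count M x)"
    by (simp add: size_multiset_overloaded_eq)
  also have "\<dots> = (\<Sum>x\<in>X. count M x)"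
    using assms by (intro sum.mono_neutral_left) (auto simp: not_in_iff)
  finally show ?thesis .
qed

lemma size_Delta:
  assumes "finite B"
  shows "size (Delta G B) = card B * (card B - 1)"
proof -
  let ?diag = "(\<lambda>x. (x, x)) ` B"
  have "size (Delta G B) = card {(x, y). x \<in> B \<and> y \<in> B \<and> x \<noteq> y}"
    by (simp add: Delta_def)
  also have "{(x, y). x \<in> B \<and> y \<in> B \<and> x \<noteq> y} = B \<times> B - ?diag"
    by auto
  also have "card (B \<times> B - ?diag) = card B * card B - card ?diag"
    using assms by (subst card_Diff_subset) (auto simp: card_cartesian_product)
  also have "card ?diag = card B"
    by (rule card_image) (auto simp: inj_on_def)
  finally show ?thesis
    by (simp add: diff_mult_distrib2)
qed

lemma size_IntD:
  assumes "finite A" "\<And>B. B \<in> A \<Longrightarrow> finite B" "\<And>B. B \<in> A \<Longrightarrow> card B = k"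
  shows "size (IntD G A) = card A * (k * (k - 1))"
  using assms by (simp add: IntD_def size_Delta)

context group
begin

lemma set_mset_Delta:
  assumes "D \<subseteq> carrier G"
  shows "set_mset (Delta G D) \<subseteq> carrier G - {\<one>}"
proof
  let ?P = "{(x, y). x \<in> D \<and> y \<in> D \<and> x \<noteq> y}"
  fix g assume "g \<in># Delta G D"
  then obtain p where "p \<in># mset_set ?P" "g = (\<lambda>(x, y). x \<otimes> inv y) p"
    unfolding Delta_def by auto
  moreover from this have "p \<in> ?P"
    by (cases "finite ?P") auto
  ultimately obtain x y where "x \<in> carrier G" "y \<in> carrier G" "x \<noteq> y" "g = x \<otimes> inv y"
    using assms by auto
  then show "g \<in> carrier G - {\<one>}"
    using inv_solve_right'[of \<one> x y] by auto
qed

lemma count_Delta: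
  assumes "D \<subseteq> carrier G" "finite D" "g \<in> carrier G" "g \<noteq> \<one>"
  shows "count (Delta G D) g = card {y \<in> D. g \<otimes> y \<in> D}"
proof -
  let ?P = "{(x, y). x \<in> D \<and> y \<in> D \<and> x \<noteq> y}" and ?q = "\<lambda>(x, y). x \<otimes> inv y"
  have fin: "finite ?P"
    by (rule finite_subset[of _ "D \<times> D"]) (use assms(2) in auto)
  have "{p \<in> ?P. ?q p = g} = (\<lambda>y. (g \<otimes> y, y)) ` {y \<in> D. g \<otimes> y \<in> D}"
  proof (intro equalityI subsetI)
    fix p assume p: "p \<in> {p \<in> ?P. ?q p = g}"
    obtain x y where xy: "p = (x, y)"
      by (cases p)
    with p have x: "x \<in> D" and y: "y \<in> D" and q: "x \<otimes> inv y = g"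
      by auto
    have "x = g \<otimes> y"
      using inv_solve_right'[OF assms(3), of x y] q x y assms(1) by blast
    with x y show "p \<in> (\<lambda>y. (g \<otimes> y, y)) ` {y \<in> D. g \<otimes> y \<in> D}"
      unfolding xy by blast
  next
    fix p assume "p \<in> (\<lambda>y. (g \<otimes> y, y)) ` {y \<in> D. g \<otimes> y \<in> D}"
    then obtain y where p: "p = (g \<otimes> y, y)" and y: "y \<in> D" "g \<otimes> y \<in> D"
      by blast
    have yG: "y \<in> carrier G"
      using assms(1) y(1) by blast
    have "g \<otimes> y \<noteq> y"
      using r_cancel_one[OF yG assms(3)] assms(4) by simp
    moreover have "g \<otimes> y \<otimes> inv y = g"
      using inv_solve_right'[OF assms(3), of "g \<otimes> y" y] yG assms(3) by simp
    ultimately show "p \<in> {p \<in> ?P. ?q p = g}"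
      using p y by simp
  qed
  moreover have "inj_on (\<lambda>y. (g \<otimes> y, y)) {y \<in> D. g \<otimes> y \<in> D}"
    by (rule inj_onI) simp
  ultimately show ?thesis
    unfolding Delta_def count_image_mset_mset_set[OF fin] by (simp add: card_image)
qed

lemma card_Un_l_coset:
  assumes "subgroup H G" "finite (carrier G)" "x \<in> carrier G"
  shows "card (H \<union> l_coset G x H) = (if x \<in> H then 1 else 2) * card H"
proof -
  interpret H: subgroup H G by fact
  have cosets: "H \<in> lcosets H" "l_coset G x H \<in> lcosets H"
    using lcos_mult_one[OF H.subset] assms(3) unfolding LCOSETS_def by force+
  show ?thesis
  proof (cases "x \<in> H")
    case True
    then have "l_coset G x H = H"
      using l_repr_independence[of x \<one> H] lcos_mult_one[OF H.subset] assms(1) by simp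
    with True show ?thesis
      by simp
  next
    case False
    then have "l_coset G x H \<noteq> H"
      using lcos_self[OF assms(3,1)] by auto
    then have "H \<inter> l_coset G x H = {}"
      using lcos_disjoint[OF assms(1) cosets] by blast
    moreover have "card (l_coset G x H) = card H"
      using l_card_cosets_equal[OF cosets(2) H.subset assms(2)] by simp
    moreover have "finite H" "finite (l_coset G x H)"
      using assms(2) H.subset l_coset_subset_G[OF H.subset assms(3)] by (auto intro: finite_subset)
    ultimately show ?thesis
      using False by (simp add: card_Un_disjoint)
  qed
qed

lemma card_shift_complement:
  assumes "subgroup H G" "finite (carrier G)" "g \<in> carrier G"
  shows "card {y \<in> carrier G - H. g \<otimes> y \<in> carrier G - H}
           = order G - (if g \<in> H then 1 else 2) * card H"
proof -
  interpret H: subgroup H G by fact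
  have "{y \<in> carrier G. g \<otimes> y \<in> H} = l_coset G (inv g) H"
    using H.lcos_module_imp[OF is_group, of "inv g"] H.lcos_module_rev[OF is_group, of "inv g"]
      l_coset_carrier[OF _ _ assms(1)] assms(3) by auto
  then have shift: "{y \<in> carrier G - H. g \<otimes> y \<in> carrier G - H} = carrier G - (H \<union> l_coset G (inv g) H)"
    using assms(3) by auto
  have "inv g \<in> H \<longleftrightarrow> g \<in> H"
    using H.m_inv_closed[of g] H.m_inv_closed[of "inv g"] assms(3) by auto
  then have card_Un: "card (H \<union> l_coset G (inv g) H) = (if g \<in> H then 1 else 2) * card H"
    using card_Un_l_coset[OF assms(1,2)] assms(3) by simp
  have sub: "H \<union> l_coset G (inv g) H \<subseteq> carrier G"
    using H.subset l_coset_subset_G[OF H.subset, of "inv g"] assms(3) by auto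
  show ?thesis
    unfolding shift order_def card_Un[symmetric]
    using card_Diff_subset[OF finite_subset[OF sub assms(2)] sub] .
qed

end

lemma coprime_diff_one_if_gcd_eq_1:
  fixes m n :: nat
  assumes "gcd (m * n - n) (m * n - 1) = 1"
  shows "coprime (m - 1) (n - 1)"
proof (rule coprimeI)
  have "m \<noteq> 0" "n \<noteq> 0"
    using assms by (auto intro: ccontr)
  then have split: "m * n - n = (m - 1) * n" "m * n - 1 = (m - 1) * n + (n - 1)"
    by (auto simp: diff_mult_distrib)
  fix c assume "c dvd m - 1" "c dvd n - 1"
  then have "c dvd m * n - n" "c dvd m * n - 1"
    unfolding split by simp_all
  then have "c dvd gcd (m * n - n) (m * n - 1)"
    by (rule gcd_greatest)
  then show "is_unit c"
    by (simp only: assms)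
qed

lemma coprime_bounded_solution_dichotomy:
  fixes a b x y :: int
  assumes "coprime a b" "0 < a" "0 < b"
    and eq: "a * (b + 1) * x = b * y" and "0 \<le> y" "y \<le> a * (b + 1)"
  shows "x = 0 \<and> y = 0 \<or> x = b \<and> y = a * (b + 1)"
proof -
  have "b + 1 dvd b * y"
    unfolding eq[symmetric] by (simp add: mult.commute mult.left_commute)
  then obtain t where y: "y = (b + 1) * t"
    using coprime_dvd_mult_right_iff[OF coprime_add_one_left] by blast
  have "(b + 1) * (a * x) = (b + 1) * (b * t)"
    using eq unfolding y by (simp add: ac_simps)
  then have at: "a * x = b * t"
    using \<open>0 < b\<close> by simp
  then have "a dvd t"
    using coprime_dvd_mult_right_iff[OF \<open>coprime a b\<close>] by (metis dvd_triv_left)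
  then obtain q where t: "t = a * q"
    by blast
  have "0 \<le> q" "q \<le> 1"
    using \<open>0 \<le> y\<close> \<open>y \<le> a * (b + 1)\<close> \<open>0 < a\<close> \<open>0 < b\<close> unfolding y t
    by (simp_all add: zero_le_mult_iff mult_le_cancel_left_pos ac_simps)
  then consider "q = 0" | "q = 1"
    by linarith
  then show ?thesis
  proof cases
    case 1
    then show ?thesis
      using at \<open>0 < a\<close> unfolding y t by simp
  next
    case 2
    then show ?thesis
      using at \<open>0 < a\<close> unfolding y t by (simp add: mult.commute)
  qed
qed

locale DPDF_EPDF_partition = group G for G (structure) +
  fixes H :: "'a set" and A :: "'a set set" and m n s k :: nat and lam1 mu1 lam2 mu2 :: int
  assumes finite_carrier: "finite (carrier G)"
    and order_eq: "order G = m * n"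
    and subgroup_H: "subgroup H G"
    and card_H: "card H = n"
    and partitions_A: "partitions A (carrier G - H)"
    and DPDF_A: "DPDF G (m * n) s k lam1 mu1 A"
    and EPDF_A: "EPDF G (m * n) s k lam2 mu2 A"
begin

lemma H_subset: "H \<subseteq> carrier G"
  using subgroup_H by (rule subgroup.subset)

lemma finite_H: "finite H"
  using finite_subset[OF H_subset finite_carrier] .

lemma one_in_H: "\<one> \<in> H"
  using subgroup_H by (rule subgroup.one_closed)

lemma Union_A: "\<Union>A = carrier G - H"
  using partitions_A by (simp add: partitions_def)

lemma finite_A: "finite A" and card_A: "card A = s" and disjoint_A: "pairwise disjnt A"
  and finite_block: "B \<in> A \<Longrightarrow> finite B" and card_block: "B \<in> A \<Longrightarrow> card B = k"
  using DPDF_A finite_carrier by (auto simp: DPDF_def pdf_family_def intro: finite_subset)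

lemma card_complement_H: "card (carrier G - H) = m * n - n"
  using H_subset finite_carrier order_eq card_H
  by (simp add: card_Diff_subset finite_subset order_def)

lemma card_H_minus_one: "card (H - {\<one>}) = n - 1"
  using one_in_H card_H by simp

lemma s_times_k_eq: "s * k = m * n - n"
proof -
  have "card (\<Union>A) = (\<Sum>B\<in>A. card B)"
    using disjoint_A finite_block by (intro card_Union_disjoint) auto
  then show ?thesis
    using Union_A card_complement_H card_block card_A by simp
qed

lemma n_pos: "1 \<le> n"
  using one_in_H card_H finite_H by (metis card_0_eq empty_iff less_one not_less)

lemma m_pos: "1 \<le> m"
  using order_eq finite_carrier one_closed by (cases m) (auto simp: order_def)

lemma Union_A_nonempty_iff: "\<Union>A \<noteq> {} \<longleftrightarrow> 2 \<le> m"
proof -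
  have "\<Union>A \<noteq> {} \<longleftrightarrow> card (carrier G - H) \<noteq> 0"
    using Union_A finite_carrier by (metis card_0_eq finite_Diff)
  also have "\<dots> \<longleftrightarrow> m * n - n \<noteq> 0"
    using card_complement_H by simp
  also have "\<dots> \<longleftrightarrow> 2 \<le> m"
    using n_pos m_pos by (cases m) auto
  finally show ?thesis .
qed

lemma H_nontrivial_iff: "H - {\<one>} \<noteq> {} \<longleftrightarrow> 2 \<le> n"
proof -
  have "H - {\<one>} \<noteq> {} \<longleftrightarrow> card (H - {\<one>}) \<noteq> 0"
    using finite_H by (metis card_0_eq finite_Diff)
  then show ?thesis
    using card_H_minus_one by linarith
qed

lemma count_IntD_complement: "g \<in> carrier G - H \<Longrightarrow> int (count (IntD G A) g) = lam1"
  and count_IntD_H: "g \<in> H - {\<one>} \<Longrightarrow> int (count (IntD G A) g) = mu1"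
  and count_ExtD_complement: "g \<in> carrier G - H \<Longrightarrow> int (count (ExtD G A) g) = lam2"
  and count_ExtD_H: "g \<in> H - {\<one>} \<Longrightarrow> int (count (ExtD G A) g) = mu2"
  using DPDF_A EPDF_A H_subset unfolding DPDF_def EPDF_def Union_A by auto

lemma IntD_plus_ExtD_eq: "IntD G A + ExtD G A = Delta G (carrier G - H)"
  using IntD_plus_ExtD[OF finite_A finite_block disjoint_A] Union_A by simp

lemma count_IntD_plus_ExtD:
  assumes "g \<in> carrier G - {\<one>}"
  shows "count (IntD G A) g + count (ExtD G A) g = m * n - (if g \<in> H then 1 else 2) * n"
proof -
  have "count (IntD G A) g + count (ExtD G A) g = count (Delta G (carrier G - H)) g"
    by (simp flip: IntD_plus_ExtD_eq)
  also have "\<dots> = card {y \<in> carrier G - H. g \<otimes> y \<in> carrier G - H}"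
    using assms finite_carrier by (intro count_Delta) auto
  also have "\<dots> = m * n - (if g \<in> H then 1 else 2) * n"
    using card_shift_complement[OF subgroup_H finite_carrier] assms order_eq card_H by simp
  finally show ?thesis .
qed

lemma lam_sum: "\<Union>A \<noteq> {} \<Longrightarrow> lam1 + lam2 = int m * int n - 2 * int n"
proof -
  assume "\<Union>A \<noteq> {}"
  then obtain g where g: "g \<in> carrier G - H"
    using Union_A by auto
  then have "count (IntD G A) g + count (ExtD G A) g = m * n - 2 * n"
    using count_IntD_plus_ExtD[of g] one_in_H by auto
  then have "lam1 + lam2 = int (m * n - 2 * n)"
    using count_IntD_complement[OF g] count_ExtD_complement[OF g] by (metis of_nat_add)
  moreover have "2 * n \<le> m * n"
    using \<open>\<Union>A \<noteq> {}\<close> Union_A_nonempty_iff by simp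
  ultimately show ?thesis
    by (simp add: of_nat_diff)
qed

lemma mu_sum: "H - {\<one>} \<noteq> {} \<Longrightarrow> mu1 + mu2 = int m * int n - int n"
proof -
  assume "H - {\<one>} \<noteq> {}"
  then obtain g where g: "g \<in> H - {\<one>}"
    by auto
  then have "count (IntD G A) g + count (ExtD G A) g = m * n - n"
    using count_IntD_plus_ExtD[of g] H_subset by auto
  then have "mu1 + mu2 = int (m * n - n)"
    using count_IntD_H[OF g] count_ExtD_H[OF g] by (metis of_nat_add)
  moreover have "n \<le> m * n"
    using m_pos by simp
  ultimately show ?thesis
    by (simp add: of_nat_diff)
qed

lemma mu1_nonneg: "H - {\<one>} \<noteq> {} \<Longrightarrow> 0 \<le> mu1"
  and mu2_nonneg: "H - {\<one>} \<noteq> {} \<Longrightarrow> 0 \<le> mu2"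
  using count_IntD_H count_ExtD_H by force+

lemma IntD_counting: "(int m - 1) * int n * (int k - 1 - lam1) = (int n - 1) * mu1"
proof -
  have "n \<le> m * n"
    using m_pos by simp
  then have sk: "int (s * k) = (int m - 1) * int n"
    using s_times_k_eq by (metis of_nat_diff of_nat_mult left_diff_distrib' mult_1)
  have "set_mset (IntD G A) \<subseteq> set_mset (Delta G (carrier G - H))"
    by (simp flip: IntD_plus_ExtD_eq)
  also have "\<dots> \<subseteq> carrier G - {\<one>}"
    by (rule set_mset_Delta) auto
  finally have supp: "set_mset (IntD G A) \<subseteq> carrier G - {\<one>}" .
  have "int (s * k) * (int k - 1) = int (size (IntD G A))"
    using size_IntD[OF finite_A finite_block card_block, of G] card_A by (cases k) (simp_all add: algebra_simps)
  also have "\<dots> = (\<Sum>g\<in>carrier G - {\<one>}. int (count (IntD G A) g))"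
    using size_eq_sum_count[OF _ supp] finite_carrier by (simp flip: of_nat_sum)
  also have "carrier G - {\<one>} = (carrier G - H) \<union> (H - {\<one>})"
    using H_subset one_in_H by auto
  also have "(\<Sum>g\<in>(carrier G - H) \<union> (H - {\<one>}). int (count (IntD G A) g))
      = (\<Sum>g\<in>carrier G - H. int (count (IntD G A) g)) + (\<Sum>g\<in>H - {\<one>}. int (count (IntD G A) g))"
    using finite_carrier finite_H by (intro sum.union_disjoint) auto
  also have "\<dots> = int (s * k) * lam1 + int (n - 1) * mu1"
    using count_IntD_complement count_IntD_H card_complement_H card_H_minus_one s_times_k_eq by simp
  finally show ?thesis
    unfolding sk using n_pos by (simp add: of_nat_diff algebra_simps)
qed

lemma n_dvd_mu1: "int n dvd mu1"
proof -
  have "int n dvd (int n - 1) * mu1"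
    unfolding IntD_counting[symmetric] by simp
  then show ?thesis
    using coprime_dvd_mult_right_iff[OF coprime_doff_one_right] by blast
qed

lemma n_dvd_mu2: "int n dvd mu2"
proof (cases "H - {\<one>} = {}")
  case True
  then have "n = 1"
    using H_nontrivial_iff n_pos by simp
  then show ?thesis
    by simp
next
  case False
  then have "mu2 = int n * (int m - 1) - mu1"
    using mu_sum by (simp add: algebra_simps)
  then show ?thesis
    using n_dvd_mu1 by simp
qed

text \<open>For m = 1 (resp. n = 1) no element carries lam1 (resp. mu1), so that parameter is
  arbitrary; hence the guards.\<close>

lemma lam1_mu1_dichotomy:
  assumes "coprime (m - 1) (n - 1)"
  obtains (mu_zero) "\<Union>A \<noteq> {} \<Longrightarrow> lam1 = int k - 1" "H - {\<one>} \<noteq> {} \<Longrightarrow> mu1 = 0"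
    | (mu_full) "\<Union>A \<noteq> {} \<Longrightarrow> lam1 = int k - int n"
        "H - {\<one>} \<noteq> {} \<Longrightarrow> mu1 = int m * int n - int n"
proof -
  consider "m = 1" | "n = 1" | "2 \<le> m" "2 \<le> n"
    using m_pos n_pos by linarith
  then show ?thesis
  proof cases
    case 1
    with assms n_pos have "n = 2"
      by simp
    with 1 have "mu1 = 0"
      using IntD_counting by simp
    with 1 show ?thesis
      using mu_zero Union_A_nonempty_iff by simp
  next
    case 2
    with assms m_pos have "m = 2"
      by simp
    with 2 have "lam1 = int k - 1"
      using IntD_counting by simp
    with 2 show ?thesis
      using mu_zero H_nontrivial_iff by simp
  next
    case 3
    have cop: "coprime (int m - 1) (int n - 1)"
      using assms m_pos n_pos by (metis coprime_int_iff of_nat_1 of_nat_diff)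
    have "H - {\<one>} \<noteq> {}"
      using H_nontrivial_iff 3 by simp
    then have bounds: "0 \<le> mu1" "mu1 \<le> (int m - 1) * (int n - 1 + 1)"
      using mu1_nonneg mu2_nonneg mu_sum by (simp_all add: algebra_simps)
    have "(int m - 1) * (int n - 1 + 1) * (int k - 1 - lam1) = (int n - 1) * mu1"
      using IntD_counting by simp
    then have "int k - 1 - lam1 = 0 \<and> mu1 = 0
        \<or> int k - 1 - lam1 = int n - 1 \<and> mu1 = (int m - 1) * (int n - 1 + 1)"
      using cop bounds 3 by (intro coprime_bounded_solution_dichotomy) simp_all
    then show ?thesis
      using mu_zero mu_full by (auto simp: algebra_simps)
  qed
qed

lemma DPDF_EPDF_with_parameters:
  assumes "v = m * n"
    and "\<Union>A \<noteq> {} \<Longrightarrow> lam1 = l" and "H - {\<one>} \<noteq> {} \<Longrightarrow> mu1 = u"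
    and "l + l' = int m * int n - 2 * int n" and "u + u' = int m * int n - int n"
  shows "DPDF G v s k l u A \<and> EPDF G v s k l' u' A"
proof -
  have "\<Union>A \<noteq> {} \<Longrightarrow> lam2 = l'"
    using lam_sum assms(2,4) by force
  moreover have "H - {\<one>} \<noteq> {} \<Longrightarrow> mu2 = u'"
    using mu_sum assms(3,5) by force
  ultimately show ?thesis
    using DPDF_A EPDF_A assms(1-3) H_subset unfolding DPDF_def EPDF_def Union_A by auto
qed

lemma DPDF_EPDF_dichotomy:
  assumes "coprime (m - 1) (n - 1)"
  shows "(DPDF G (m * n) s k (int k - 1) 0 A
            \<and> EPDF G (m * n) s k (int m * int n - 2 * int n - int k + 1) (int m * int n - int n) A)
       \<or> (DPDF G (m * n) s k (int k - int n) (int m * int n - int n) A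
            \<and> EPDF G (m * n) s k (int m * int n - int n - int k) 0 A)"
  using assms
proof (cases rule: lam1_mu1_dichotomy)
  case mu_zero
  then show ?thesis
    by (intro disjI1 DPDF_EPDF_with_parameters) simp_all
next
  case mu_full
  then show ?thesis
    by (intro disjI2 DPDF_EPDF_with_parameters) simp_all
qed

lemma DPDF_EPDF_dichotomy_card_H_2:
  assumes "n = 2"
  shows "(DPDF G (2 * m) s k (int k - 1) 0 A
            \<and> EPDF G (2 * m) s k (2 * int m - 3 - int k) (2 * int m - 2) A)
       \<or> (DPDF G (2 * m) s k (int k - 2) (2 * int m - 2) A
            \<and> EPDF G (2 * m) s k (2 * int m - 2 - int k) 0 A)"
proof -
  have "coprime (m - 1) (n - 1)"
    using assms by simp
  then show ?thesis
  proof (cases rule: lam1_mu1_dichotomy)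
    case mu_zero
    with assms show ?thesis
      by (intro disjI1 DPDF_EPDF_with_parameters) simp_all
  next
    case mu_full
    with assms show ?thesis
      by (intro disjI2 DPDF_EPDF_with_parameters) simp_all
  qed
qed

end

theorem mainTheorem11:
  fixes G (structure) and H :: "'a set" and A :: "'a set set"
    and m n s k :: nat and lam1 mu1 lam2 mu2 :: int
  assumes "group G" and "finite (carrier G)" and "order G = m * n"
    and "subgroup H G" and "card H = n"
    and "partitions A (carrier G - H)"
    and "DPDF G (m * n) s k lam1 mu1 A"
    and "EPDF G (m * n) s k lam2 mu2 A"
  shows "(int n dvd mu1 \<and> int n dvd mu2)
    \<and> (gcd (m * n - n) (m * n - 1) = 1 \<longrightarrow>
         (DPDF G (m * n) s k (int k - 1) 0 A
            \<and> EPDF G (m * n) s k (int m * int n - 2 * int n - int k + 1) (int m * int n - int n) A)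
       \<or> (DPDF G (m * n) s k (int k - int n) (int m * int n - int n) A
            \<and> EPDF G (m * n) s k (int m * int n - int n - int k) 0 A))
    \<and> (n = 2 \<longrightarrow>
         (DPDF G (2 * m) s k (int k - 1) 0 A
            \<and> EPDF G (2 * m) s k (2 * int m - 3 - int k) (2 * int m - 2) A)
       \<or> (DPDF G (2 * m) s k (int k - 2) (2 * int m - 2) A
            \<and> EPDF G (2 * m) s k (2 * int m - 2 - int k) 0 A))"
proof -
  interpret DPDF_EPDF_partition G H A m n s k lam1 mu1 lam2 mu2
    using assms by (simp add: DPDF_EPDF_partition_def DPDF_EPDF_partition_axioms_def)
  show ?thesis
    using n_dvd_mu1 n_dvd_mu2 DPDF_EPDF_dichotomy[OF coprime_diff_one_if_gcd_eq_1]
      DPDF_EPDF_dichotomy_card_H_2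
    by blast
qed

end
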